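(* Let $V$ be a vector space of dimension $\ge n$ over a field, and let $g_1,\dots,g_n\in \mathrm{GL}(V)$ satisfy $\operatorname{rank}(g_i-1)\le 1$ for all $i$, with $g_1g_2\cdots g_n=\mu\cdot\mathrm{id}_V$ for a scalar $\mu$. Then either $\mu=1$ or $\det(g_i)=\mu$ for all $i$. *)

theory Defs
  imports "Jordan_Normal_Form.DL_Rank" "Jordan_Normal_Form.Determinant"
begin

definition mat_prod_upto :: "nat \<Rightarrow> nat \<Rightarrow> (nat \<Rightarrow> 'a::semiring_1 mat) \<Rightarrow> 'a mat" where
  "mat_prod_upto d n g = foldr (*) (map g [0..<n]) (1\<^sub>m d)"

end

theory Submission
  imports Defs
begin

(* Write g_i = 1 + c_i w_i^T, which rank (g_i - 1) <= 1 allows. For a fixed i the n - 1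
   linear forms w_j, j ~= i, have a common nonzero zero x because dim V >= n. Every g_j with
   j ~= i fixes x, so g_1 ... g_n = mu forces g_i x = mu x, i.e. (w_i . x) c_i = (mu - 1) x.
   If mu ~= 1 then w_i . x ~= 0, hence w_i . c_i = mu - 1, and the matrix determinant lemma
   det (1 + c w^T) = 1 + w . c gives det g_i = mu. *)

definition outer_prod_mat :: "'a::semiring_1 vec \<Rightarrow> 'a vec \<Rightarrow> 'a mat" where
  "outer_prod_mat c w = mat (dim_vec c) (dim_vec w) (\<lambda>(i, j). c $ i * w $ j)"

lemma outer_prod_mat_carrier [simp]:
  "outer_prod_mat c w \<in> carrier_mat (dim_vec c) (dim_vec w)"
  unfolding outer_prod_mat_def by simp

lemma outer_prod_mat_mult_vec:
  fixes c w x :: "'a::comm_semiring_1 vec"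
  assumes "dim_vec x = dim_vec w"
  shows "outer_prod_mat c w *\<^sub>v x = (w \<bullet> x) \<cdot>\<^sub>v c"
proof (rule eq_vecI)
  fix r assume "r < dim_vec ((w \<bullet> x) \<cdot>\<^sub>v c)"
  then have r: "r < dim_vec c" by simp
  have "(outer_prod_mat c w *\<^sub>v x) $ r = (\<Sum>k<dim_vec w. c $ r * w $ k * x $ k)"
    using r assms by (simp add: outer_prod_mat_def scalar_prod_def lessThan_atLeast0)
  also have "\<dots> = c $ r * (w \<bullet> x)"
    using assms unfolding scalar_prod_def by (simp add: sum_distrib_left mult.assoc lessThan_atLeast0)
  finally show "(outer_prod_mat c w *\<^sub>v x) $ r = ((w \<bullet> x) \<cdot>\<^sub>v c) $ r"
    using r by (simp add: mult.commute)
qed (simp add: outer_prod_mat_def)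

lemma det_one_plus_mult_commute:
  fixes C W :: "'a::idom mat"
  assumes C: "C \<in> carrier_mat n m" and W: "W \<in> carrier_mat m n"
  shows "det (1\<^sub>m n + C * W) = det (1\<^sub>m m + W * C)"
proof -
  define L where "L = four_block_mat (1\<^sub>m m + W * C) (- W) (0\<^sub>m n m) (1\<^sub>m n)"
  define M where "M = four_block_mat (1\<^sub>m m) (0\<^sub>m m n) C (1\<^sub>m n)"
  define R where "R = four_block_mat (1\<^sub>m m) (- W) (0\<^sub>m n m) (1\<^sub>m n + C * W)"
  have carriers: "L \<in> carrier_mat (m + n) (m + n)" "M \<in> carrier_mat (m + n) (m + n)"
    "R \<in> carrier_mat (m + n) (m + n)"
    unfolding L_def M_def R_def using C W by auto
  have "L * M = four_block_mat (1\<^sub>m m) (- W) C (1\<^sub>m n)"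
    unfolding L_def M_def using C W
    by (subst mult_four_block_mat[of _ m m _ n _ n])
      (auto simp: uminus_mult_left_mat add_mult_distrib_mat)
  moreover have "M * R = four_block_mat (1\<^sub>m m) (- W) C (1\<^sub>m n)"
    unfolding M_def R_def using C W
    by (subst mult_four_block_mat[of _ m m _ n _ n]) (auto simp: mult_add_distrib_mat)
  ultimately have "det L * det M = det M * det R"
    using carriers by (metis det_mult)
  moreover have "det M = 1"
    unfolding M_def using C by (subst det_four_block_mat_upper_right_zero[of _ m _ n]) auto
  moreover have "det L = det (1\<^sub>m m + W * C)"
    unfolding L_def using C W by (subst det_four_block_mat_lower_left_zero[of _ m _ n]) auto
  moreover have "det R = det (1\<^sub>m n + C * W)"
    unfolding R_def using C W by (subst det_four_block_mat_lower_left_zero[of _ m _ n]) auto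
  ultimately show ?thesis by simp
qed

lemma det_one_plus_outer_prod_mat:
  fixes c w :: "'a::idom vec"
  assumes c: "c \<in> carrier_vec n" and w: "w \<in> carrier_vec n"
  shows "det (1\<^sub>m n + outer_prod_mat c w) = 1 + w \<bullet> c"
proof -
  have C: "mat_of_cols n [c] \<in> carrier_mat n 1" and W: "mat_of_rows n [w] \<in> carrier_mat 1 n"
    by auto
  have "mat_of_cols n [c] * mat_of_rows n [w] = outer_prod_mat c w"
    using c w
    by (intro eq_matI) (auto simp: outer_prod_mat_def scalar_prod_def mat_of_cols_def mat_of_rows_def)
  moreover have "det (1\<^sub>m 1 + mat_of_rows n [w] * mat_of_cols n [c]) = 1 + w \<bullet> c"
    using c w C W by (subst det_single) (auto simp: scalar_prod_def)
  ultimately show ?thesis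
    using det_one_plus_mult_commute[OF C W] by simp
qed

lemma (in vec_space) lin_dep_pair_imp_smult:
  assumes c: "c \<in> carrier_vec n" and v: "v \<in> carrier_vec n"
    and "c \<noteq> 0\<^sub>v n" and "v \<noteq> c" and "lin_dep {c, v}"
  obtains a where "v = a \<cdot>\<^sub>v c"
proof -
  let ?B = "mat_of_cols n [c, v]"
  have B: "?B \<in> carrier_mat n 2"
    by (metis mat_of_cols_carrier(1) length_Cons list.size(3) numeral_2_eq_2)
  have cols: "cols ?B = [c, v]" using c v by simp
  obtain u where u: "u \<in> carrier_vec 2" "u \<noteq> 0\<^sub>v 2" "?B *\<^sub>v u = 0\<^sub>v n"
    using lin_depE[OF B] cols \<open>lin_dep {c, v}\<close> \<open>v \<noteq> c\<close> by auto
  have comb: "u $ 0 * c $ r + u $ 1 * v $ r = 0" if "r < n" for r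
  proof -
    have "(?B *\<^sub>v u) $ r = 0" using u(3) that by simp
    then show ?thesis
      using that u(1) c v by (simp add: mat_of_cols_def scalar_prod_def numeral_2_eq_2 mult.commute)
  qed
  have "u $ 1 \<noteq> 0"
  proof
    assume u1: "u $ 1 = 0"
    have "u $ 0 \<noteq> 0"
    proof
      assume "u $ 0 = 0"
      with u1 u(1) have "u = 0\<^sub>v 2" by (intro eq_vecI) (auto simp: less_2_cases_iff)
      with u(2) show False ..
    qed
    with comb u1 c have "c = 0\<^sub>v n" by (intro eq_vecI) auto
    with \<open>c \<noteq> 0\<^sub>v n\<close> show False ..
  qed
  then have "v = (- u $ 0 / u $ 1) \<cdot>\<^sub>v c"
    using comb c v by (intro eq_vecI) (auto simp: field_simps add_eq_0_iff)
  then show ?thesis ..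
qed

lemma (in vec_space) rank_le_1_imp_outer_prod:
  assumes A: "A \<in> carrier_mat n nc" and "rank A \<le> 1"
  obtains c w where "c \<in> carrier_vec n" "w \<in> carrier_vec nc" "A = outer_prod_mat c w"
proof (cases "\<exists>k<nc. col A k \<noteq> 0\<^sub>v n")
  case False
  have "A = outer_prod_mat (0\<^sub>v n) (0\<^sub>v nc)"
  proof (rule eq_matI)
    fix i k assume "i < dim_row (outer_prod_mat (0\<^sub>v n) (0\<^sub>v nc))"
      "k < dim_col (outer_prod_mat (0\<^sub>v n) (0\<^sub>v nc))"
    then have ik: "i < n" "k < nc" by (simp_all add: outer_prod_mat_def)
    then have "col A k $ i = 0" using False by simp
    then show "A $$ (i, k) = outer_prod_mat (0\<^sub>v n) (0\<^sub>v nc) $$ (i, k)"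
      using ik A by (simp add: outer_prod_mat_def)
  qed (use A in \<open>simp_all add: outer_prod_mat_def\<close>)
  from that[OF _ _ this] show ?thesis by simp
next
  case True
  then obtain j where j: "j < nc" "col A j \<noteq> 0\<^sub>v n" by blast
  define c where "c = col A j"
  have c: "c \<in> carrier_vec n" "c \<in> set (cols A)"
    using A j unfolding c_def cols_def by auto
  have "\<exists>a. col A k = a \<cdot>\<^sub>v c" if k: "k < nc" for k
  proof (cases "col A k = c")
    case True
    then show ?thesis using c(1) by (intro exI[of _ 1]) simp
  next
    case False
    have "col A k \<in> set (cols A)" using A k unfolding cols_def by auto
    have "lin_dep {c, col A k}"
    proof (rule ccontr)
      assume "\<not> lin_dep {c, col A k}"
      then have "card {c, col A k} \<le> rank A"
        using rank_ge_card_indpt[OF A, of "{c, col A k}"] c(2) \<open>col A k \<in> set (cols A)\<close> by auto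
      with False \<open>rank A \<le> 1\<close> show False by simp
    qed
    moreover have "col A k \<in> carrier_vec n" using A k by simp
    moreover have "c \<noteq> 0\<^sub>v n" using j(2) unfolding c_def .
    ultimately obtain a where "col A k = a \<cdot>\<^sub>v c"
      using lin_dep_pair_imp_smult[OF c(1)] False by blast
    then show ?thesis ..
  qed
  then obtain a where a: "\<And>k. k < nc \<Longrightarrow> col A k = a k \<cdot>\<^sub>v c" by metis
  have "A = outer_prod_mat c (vec nc a)"
  proof (rule eq_matI)
    fix i k assume "i < dim_row (outer_prod_mat c (vec nc a))"
      "k < dim_col (outer_prod_mat c (vec nc a))"
    then have ik: "i < n" "k < nc" using c by (simp_all add: outer_prod_mat_def)
    then have "col A k $ i = a k * c $ i" using a c by simp
    then show "A $$ (i, k) = outer_prod_mat c (vec nc a) $$ (i, k)"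
      using ik A c by (simp add: outer_prod_mat_def mult.commute)
  qed (use A c in \<open>simp_all add: outer_prod_mat_def\<close>)
  from that[OF c(1) _ this] show ?thesis by simp
qed

lemma (in vec_space) rank_minus_one_le_1_imp_one_plus_outer_prod:
  assumes A: "A \<in> carrier_mat n n" and "rank (A - 1\<^sub>m n) \<le> 1"
  obtains c w where "c \<in> carrier_vec n" "w \<in> carrier_vec n" "A = 1\<^sub>m n + outer_prod_mat c w"
proof -
  have "A - 1\<^sub>m n \<in> carrier_mat n n" by (rule minus_carrier_mat) simp
  then obtain c w where "c \<in> carrier_vec n" "w \<in> carrier_vec n" "A - 1\<^sub>m n = outer_prod_mat c w"
    using rank_le_1_imp_outer_prod \<open>rank (A - 1\<^sub>m n) \<le> 1\<close> by blast
  moreover have "A = 1\<^sub>m n + (A - 1\<^sub>m n)" using A by (intro eq_matI) auto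
  ultimately show ?thesis using that by simp
qed

lemma one_plus_outer_prod_mat_mult_vec:
  fixes c w x :: "'a::comm_semiring_1 vec"
  assumes "c \<in> carrier_vec n" and "w \<in> carrier_vec n" and "x \<in> carrier_vec n"
  shows "(1\<^sub>m n + outer_prod_mat c w) *\<^sub>v x = x + (w \<bullet> x) \<cdot>\<^sub>v c"
  using assms outer_prod_mat_carrier[of c w]
  by (subst add_mult_distrib_mat_vec[of _ n n]) (auto simp: outer_prod_mat_mult_vec)

lemma one_plus_outer_prod_mat_mult_orthogonal_vec:
  fixes c w x :: "'a::comm_semiring_1 vec"
  assumes "c \<in> carrier_vec n" and "w \<in> carrier_vec n" and "x \<in> carrier_vec n" and "w \<bullet> x = 0"
  shows "(1\<^sub>m n + outer_prod_mat c w) *\<^sub>v x = x"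
  using assms by (auto simp: one_plus_outer_prod_mat_mult_vec intro!: eq_vecI)

lemma det_one_plus_outer_prod_mat_eigenvalue:
  fixes c w x :: "'a::field vec"
  assumes c: "c \<in> carrier_vec n" and w: "w \<in> carrier_vec n" and x: "x \<in> carrier_vec n"
    and "x \<noteq> 0\<^sub>v n" and "\<mu> \<noteq> 1"
    and eigen: "(1\<^sub>m n + outer_prod_mat c w) *\<^sub>v x = \<mu> \<cdot>\<^sub>v x"
  shows "det (1\<^sub>m n + outer_prod_mat c w) = \<mu>"
proof -
  define s where "s = w \<bullet> x"
  from eigen have eq: "x + s \<cdot>\<^sub>v c = \<mu> \<cdot>\<^sub>v x"
    using one_plus_outer_prod_mat_mult_vec[OF c w x] unfolding s_def by simp
  have "s \<noteq> 0"
  proof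
    assume "s = 0"
    have "x $ r = \<mu> * x $ r" if "r < n" for r
      using arg_cong[OF eq, of "\<lambda>v. v $ r"] \<open>s = 0\<close> that c x by simp
    with \<open>\<mu> \<noteq> 1\<close> x have "x = 0\<^sub>v n"
      by (intro eq_vecI) (auto simp: mult_cancel_right1[symmetric])
    with \<open>x \<noteq> 0\<^sub>v n\<close> show False ..
  qed
  have "w \<bullet> (x + s \<cdot>\<^sub>v c) = w \<bullet> (\<mu> \<cdot>\<^sub>v x)" using eq by simp
  then have "s * (1 + w \<bullet> c) = s * \<mu>"
    using c w x by (simp add: scalar_prod_add_distrib s_def algebra_simps)
  with \<open>s \<noteq> 0\<close> have "1 + w \<bullet> c = \<mu>" by simp
  with det_one_plus_outer_prod_mat[OF c w] show ?thesis by simp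
qed

lemma exists_nonzero_orthogonal_vec:
  fixes w :: "nat \<Rightarrow> 'a::field vec"
  assumes "I \<subseteq> {..<n}" and "k < n" and "k \<notin> I" and w: "w ` I \<subseteq> carrier_vec n"
  obtains x where "x \<in> carrier_vec n" "x \<noteq> 0\<^sub>v n" "\<And>j. j \<in> I \<Longrightarrow> w j \<bullet> x = 0"
proof -
  define B where "B = mat n n (\<lambda>(r, c). if r \<in> I then w r $ c else 0)"
  have B: "B \<in> carrier_mat n n" unfolding B_def by simp
  \<comment> \<open>row k of B vanishes, so scaling it by 0 leaves B unchanged\<close>
  have "multrow k 0 B = B"
    using \<open>k \<notin> I\<close> unfolding B_def by (intro eq_matI) auto
  then have "det B = 0" using det_multrow[OF \<open>k < n\<close> B, of 0] by simp
  then obtain x where x: "x \<in> carrier_vec n" "x \<noteq> 0\<^sub>v n" "B *\<^sub>v x = 0\<^sub>v n"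
    using det_0_iff_vec_prod_zero[OF B] by blast
  have "w j \<bullet> x = 0" if "j \<in> I" for j
  proof -
    have j: "j < n" using that \<open>I \<subseteq> {..<n}\<close> by auto
    have "row B j = w j"
      using that j w unfolding B_def by (intro eq_vecI) auto
    then show ?thesis using arg_cong[OF x(3), of "\<lambda>v. v $ j"] j B by simp
  qed
  with x show ?thesis using that by blast
qed

lemma smult_one_mat_mult_vec:
  fixes v :: "'a::comm_ring_1 vec"
  assumes "v \<in> carrier_vec n"
  shows "(a \<cdot>\<^sub>m 1\<^sub>m n) *\<^sub>v v = a \<cdot>\<^sub>v v"
  using assms by (intro eq_vecI) auto

lemma foldr_mult_carrier_mat:
  fixes g :: "'b \<Rightarrow> 'a::semiring_1 mat"
  assumes "\<And>j. j \<in> set xs \<Longrightarrow> g j \<in> carrier_mat n n"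
  shows "foldr (*) (map g xs) (1\<^sub>m n) \<in> carrier_mat n n"
  using assms by (induction xs) (simp_all add: mult_carrier_mat[of _ n n])

lemma foldr_mult_mat_mult_vec:
  fixes g :: "'b \<Rightarrow> 'a::semiring_1 mat"
  assumes "\<And>j. j \<in> set xs \<Longrightarrow> g j \<in> carrier_mat n n" and "v \<in> carrier_vec n"
  shows "foldr (*) (map g xs) (1\<^sub>m n) *\<^sub>v v = foldr (\<lambda>j u. g j *\<^sub>v u) xs v"
  using assms
proof (induction xs)
  case (Cons a xs)
  have "foldr (*) (map g xs) (1\<^sub>m n) \<in> carrier_mat n n"
    using Cons.prems(1) by (intro foldr_mult_carrier_mat) auto
  moreover have "g a \<in> carrier_mat n n" using Cons.prems(1) by simp
  ultimately show ?case using Cons by (simp add: assoc_mult_mat_vec[of _ n n _ n])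
qed simp

lemma foldr_mult_vec_carrier:
  fixes g :: "'b \<Rightarrow> 'a::semiring_1 mat"
  assumes "\<And>j. j \<in> set xs \<Longrightarrow> g j \<in> carrier_mat n n" and "v \<in> carrier_vec n"
  shows "foldr (\<lambda>j u. g j *\<^sub>v u) xs v \<in> carrier_vec n"
  using assms by (induction xs) (simp_all add: mult_mat_vec_carrier[of _ n n])

lemma foldr_mult_vec_fixed:
  assumes "\<And>j. j \<in> set xs \<Longrightarrow> g j *\<^sub>v v = v"
  shows "foldr (\<lambda>j u. g j *\<^sub>v u) xs v = v"
  using assms by (induction xs) auto

lemma invertible_mat_mult_vec_inj:
  fixes A :: "'a::semiring_1 mat"
  assumes A: "A \<in> carrier_mat n n" and "invertible_mat A"
    and y: "y \<in> carrier_vec n" and z: "z \<in> carrier_vec n" and "A *\<^sub>v y = A *\<^sub>v z"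
  shows "y = z"
proof -
  obtain B where "inverts_mat B A" "inverts_mat A B"
    using \<open>invertible_mat A\<close> unfolding invertible_mat_def by blast
  then have B: "B \<in> carrier_mat n n" and BA: "B * A = 1\<^sub>m n"
    using A unfolding inverts_mat_def
    by (metis carrier_matD index_mult_mat(2,3) index_one_mat(2,3) carrier_matI)+
  have "y = (B * A) *\<^sub>v y" using BA y by simp
  also have "\<dots> = (B * A) *\<^sub>v z" using A B y z \<open>A *\<^sub>v y = A *\<^sub>v z\<close> by simp
  also have "\<dots> = z" using BA z by simp
  finally show ?thesis .
qed

lemma foldr_mult_vec_inj:
  assumes "\<And>j. j \<in> set xs \<Longrightarrow> g j \<in> carrier_mat n n \<and> invertible_mat (g j)"
    and "y \<in> carrier_vec n" and "z \<in> carrier_vec n"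
    and "foldr (\<lambda>j u. g j *\<^sub>v u) xs y = foldr (\<lambda>j u. g j *\<^sub>v u) xs z"
  shows "y = z"
  using assms
proof (induction xs)
  case (Cons a xs)
  have "foldr (\<lambda>j u. g j *\<^sub>v u) xs y \<in> carrier_vec n"
    "foldr (\<lambda>j u. g j *\<^sub>v u) xs z \<in> carrier_vec n"
    using Cons.prems(1-3) by (auto intro!: foldr_mult_vec_carrier)
  then have "foldr (\<lambda>j u. g j *\<^sub>v u) xs y = foldr (\<lambda>j u. g j *\<^sub>v u) xs z"
    using Cons.prems(1,4) invertible_mat_mult_vec_inj[of "g a" n] by simp
  with Cons show ?case by simp
qed simp

lemma mat_prod_upto_eigenvector:
  fixes g :: "nat \<Rightarrow> 'a::field mat"
  assumes g: "\<And>j. j < n \<Longrightarrow> g j \<in> carrier_mat d d \<and> invertible_mat (g j)"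
    and prod: "mat_prod_upto d n g = \<mu> \<cdot>\<^sub>m 1\<^sub>m d" and "i < n" and x: "x \<in> carrier_vec d"
    and fixed: "\<And>j. j < n \<Longrightarrow> j \<noteq> i \<Longrightarrow> g j *\<^sub>v x = x"
  shows "g i *\<^sub>v x = \<mu> \<cdot>\<^sub>v x"
proof -
  let ?act = "\<lambda>xs v. foldr (\<lambda>j u. g j *\<^sub>v u) xs v"
  have split: "[0..<n] = [0..<i] @ i # [Suc i..<n]"
    using \<open>i < n\<close> upt_add_eq_append[of 0 i "n - i"] upt_conv_Cons[of i n] by simp
  have "?act [Suc i..<n] x = x"
    using fixed by (intro foldr_mult_vec_fixed) auto
  then have "?act [0..<i] (g i *\<^sub>v x) = ?act [0..<n] x"
    unfolding split by simp
  also have "\<dots> = mat_prod_upto d n g *\<^sub>v x"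
    unfolding mat_prod_upto_def using g x by (intro foldr_mult_mat_mult_vec[symmetric]) auto
  also have "\<dots> = \<mu> \<cdot>\<^sub>v x"
    unfolding prod using x by (rule smult_one_mat_mult_vec)
  also have "\<dots> = ?act [0..<i] (\<mu> \<cdot>\<^sub>v x)"
  proof (intro foldr_mult_vec_fixed[symmetric])
    fix j assume "j \<in> set [0..<i]"
    then have "j < n" "j \<noteq> i" using \<open>i < n\<close> by auto
    then show "g j *\<^sub>v (\<mu> \<cdot>\<^sub>v x) = \<mu> \<cdot>\<^sub>v x"
      using mult_mat_vec[of "g j" d d x \<mu>] g x fixed by simp
  qed
  finally have eq: "?act [0..<i] (g i *\<^sub>v x) = ?act [0..<i] (\<mu> \<cdot>\<^sub>v x)" .
  have "g i *\<^sub>v x \<in> carrier_vec d"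
    using g[OF \<open>i < n\<close>] x by (auto intro: mult_mat_vec_carrier)
  moreover have "\<mu> \<cdot>\<^sub>v x \<in> carrier_vec d" using x by simp
  moreover have "\<And>j. j \<in> set [0..<i] \<Longrightarrow> g j \<in> carrier_mat d d \<and> invertible_mat (g j)"
    using g \<open>i < n\<close> by simp
  ultimately show ?thesis using foldr_mult_vec_inj eq by blast
qed

theorem mainTheorem2:
  fixes d n :: nat and g :: "nat \<Rightarrow> 'a::field mat" and \<mu> :: 'a
  assumes "d \<ge> n"
    and "\<And>i. i < n \<Longrightarrow> g i \<in> carrier_mat d d"
    and "\<And>i. i < n \<Longrightarrow> invertible_mat (g i)"
    and "\<And>i. i < n \<Longrightarrow> vec_space.rank d (g i - 1\<^sub>m d) \<le> 1"
    and "mat_prod_upto d n g = \<mu> \<cdot>\<^sub>m 1\<^sub>m d"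
  shows "\<mu> = 1 \<or> (\<forall>i < n. det (g i) = \<mu>)"
proof (cases "\<mu> = 1")
  case False
  have "\<exists>c w. c \<in> carrier_vec d \<and> w \<in> carrier_vec d \<and> g j = 1\<^sub>m d + outer_prod_mat c w"
    if "j < n" for j
    using vec_space.rank_minus_one_le_1_imp_one_plus_outer_prod assms(2,4) that by metis
  then obtain c w where cw: "\<And>j. j < n \<Longrightarrow>
      c j \<in> carrier_vec d \<and> w j \<in> carrier_vec d \<and> g j = 1\<^sub>m d + outer_prod_mat (c j) (w j)"
    by metis
  have "det (g i) = \<mu>" if "i < n" for i
  proof -
    have I: "{..<n} - {i} \<subseteq> {..<d}" "i < d" "i \<notin> {..<n} - {i}" using that assms(1) by auto
    have "w ` ({..<n} - {i}) \<subseteq> carrier_vec d" using cw by auto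
    from exists_nonzero_orthogonal_vec[OF I this] obtain x
      where x: "x \<in> carrier_vec d" "x \<noteq> 0\<^sub>v d" and orth: "\<And>j. j \<in> {..<n} - {i} \<Longrightarrow> w j \<bullet> x = 0"
      by blast
    have "g j *\<^sub>v x = x" if "j < n" "j \<noteq> i" for j
      using cw[OF \<open>j < n\<close>] orth[of j] one_plus_outer_prod_mat_mult_orthogonal_vec[of "c j" d "w j" x] x that
      by simp
    then have "g i *\<^sub>v x = \<mu> \<cdot>\<^sub>v x"
      using mat_prod_upto_eigenvector[OF _ assms(5) \<open>i < n\<close> x(1)] assms(2,3) by blast
    then show ?thesis
      using det_one_plus_outer_prod_mat_eigenvalue[of "c i" d "w i" x \<mu>] cw[OF \<open>i < n\<close>] x False by simp
  qed
  then show ?thesis by blast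
qed simp

end
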